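(* Let $n\ge8$ be even and $F\colon\mathbb F_2^n\to\mathbb F_2^n$ a quadratic APN function. Then $F$ has a non-bent component function with amplitude less than $2^{3n/4}$.
   Context: $\langle\cdot,\cdot\rangle$ is the standard dot product; $F_b(x)=\langle b,F(x)\rangle$. $F$ is APN if for every $a\ne0$ and $c$, $F(x)+F(x+a)=c$ has at most 2 solutions; quadratic if each $F_b$ is a quadratic form plus an affine function. For quadratic $F$ and fixed $b$, $|W_F(b,a)|\in\{0,2^{(n+k)/2}\}$ for all $a$ for some $k$, where $W_F(b,a)=\sum_x(-1)^{F_b(x)+\langle x,a\rangle}$; $2^{(n+k)/2}$ is the amplitude of $F_b$; $F_b$ is bent if its amplitude is $2^{n/2}$. Components considered are non-trivial ($b\neq0$). *)

theory Defs
  imports "HOL-Analysis.Analysis" "HOL-Library.Z2"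
begin

text \<open>F_2 is the field type bit (HOL-Library.Z2); F_2^n is bit ^ 'n with n = CARD('n).\<close>

definition dotp :: "bit ^ 'n \<Rightarrow> bit ^ 'n \<Rightarrow> bit" where
  "dotp a x = (\<Sum>i\<in>UNIV. a $ i * x $ i)"

definition sgn_bit :: "bit \<Rightarrow> int" where
  "sgn_bit z = (if z = 0 then 1 else -1)"

definition component :: "(bit ^ 'n \<Rightarrow> bit ^ 'n) \<Rightarrow> bit ^ 'n \<Rightarrow> bit ^ 'n \<Rightarrow> bit" where
  "component F b x = dotp b (F x)"

definition walsh :: "(bit ^ 'n \<Rightarrow> bit ^ 'n) \<Rightarrow> bit ^ 'n \<Rightarrow> bit ^ 'n \<Rightarrow> int" where
  "walsh F b a = (\<Sum>x\<in>UNIV. sgn_bit (component F b x + dotp x a))"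

definition is_APN :: "(bit ^ 'n \<Rightarrow> bit ^ 'n) \<Rightarrow> bool" where
  "is_APN F \<longleftrightarrow> (\<forall>a c. a \<noteq> 0 \<longrightarrow> card {x. F x + F (x + a) = c} \<le> 2)"

definition is_quadratic :: "(bit ^ 'n \<Rightarrow> bit ^ 'n) \<Rightarrow> bool" where
  "is_quadratic F \<longleftrightarrow> (\<forall>b. \<exists>(q :: 'n \<Rightarrow> 'n \<Rightarrow> bit) (l :: 'n \<Rightarrow> bit) (e :: bit).
      \<forall>x. component F b x = (\<Sum>i\<in>UNIV. \<Sum>j\<in>UNIV. q i j * x $ i * x $ j)
                             + (\<Sum>i\<in>UNIV. l i * x $ i) + e)"

text \<open>Amplitude of F_b: the maximal absolute value of its Walsh coefficients
  (for quadratic F all nonzero ones share this value).\<close>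
definition amplitude :: "(bit ^ 'n \<Rightarrow> bit ^ 'n) \<Rightarrow> bit ^ 'n \<Rightarrow> int" where
  "amplitude F b = Max (range (\<lambda>a. \<bar>walsh F b a\<bar>))"

definition is_bent_component :: "(bit ^ 'n \<Rightarrow> bit ^ 'n) \<Rightarrow> bit ^ 'n \<Rightarrow> bool" where
  "is_bent_component F b \<longleftrightarrow> real_of_int (amplitude F b) = 2 powr (real CARD('n) / 2)"

end

(*
  For quadratic F the Walsh spectrum of a component F_b is flat: its squared amplitude is
  2^n |V_b|, where V_b is the radical of the symmetric form
  (a, x) |-> b . (F (x + a) + F x + F a + F 0).
  The APN property says that every nonzero a lies in V_b for exactly one nonzero b, so the radicals
  of the non-bent components partition the nonzero vectors.  If every non-bent component had
  amplitude at least 2^(3n/4), i.e. |V_b| >= 2^m for n = 2m, these radicals would form a spread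
  (or consist of the whole space alone).  Then the set Y of all b with 2^(m+1) dividing W_F(b, 0),
  namely 0 together with the non-bent b, has 2 or 2^m + 2 elements, and summing W_F(b, 0) over a
  subgroup E of order at least 2^(m+1) shows that Y meets every such E in an even number of points.
  No such Y exists: evenness forces Y to be a Sidon set, a Sidon set has a subgroup P of order 4
  such that some, but fewer than 2^m, points y of Y meet y + P oddly, and P can then be enlarged to
  a subgroup W of order 2^(m+1) for which one coset t + W meets Y oddly.
*)

theory Submission
  imports Defs
begin

declare add_bit_eq_xor [simp del] mult_bit_eq_and [simp del]

section \<open>Arithmetic and characters of F_2^n\<close>

lemma UNIV_bit: "(UNIV :: bit set) = {0, 1}"
  by (auto intro: bit.exhaust)

instance bit :: finite
  by standard (simp add: UNIV_bit)

lemma card_bit: "CARD(bit) = 2"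
  by (simp add: UNIV_bit)

lemma bit_add_self [simp]: "(x :: bit) + x = 0"
  by (cases x) simp_all

lemma bit_vec_add_self [simp]: "(x :: bit ^ 'n) + x = 0"
  by (simp add: vec_eq_iff)

lemma bit_vec_add_self_left [simp]: "(x :: bit ^ 'n) + (x + y) = y"
  by (simp flip: add.assoc)

lemma bit_vec_add_self_right [simp]: "(y :: bit ^ 'n) + x + x = y"
  by (simp add: add.assoc)

lemma bit_vec_add_eq_0_iff: "(x :: bit ^ 'n) + y = 0 \<longleftrightarrow> x = y"
  by (metis bit_vec_add_self bit_vec_add_self_right add_0_left)

lemma sgn_bit_0 [simp]: "sgn_bit 0 = 1"
  by (simp add: sgn_bit_def)

lemma sgn_bit_1 [simp]: "sgn_bit 1 = -1"
  by (simp add: sgn_bit_def)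

lemma sgn_bit_add: "sgn_bit (u + v) = sgn_bit u * sgn_bit v"
  by (cases u; cases v) (simp_all add: sgn_bit_def)

lemma dotp_add_right: "dotp a (x + y) = dotp a x + dotp a y"
  unfolding dotp_def by (simp add: distrib_left sum.distrib)

lemma dotp_commute: "dotp a x = dotp x a"
  unfolding dotp_def by (simp add: mult.commute)

lemma dotp_add_left: "dotp (a + b) x = dotp a x + dotp b x"
  by (metis dotp_add_right dotp_commute)

lemma dotp_0_right [simp]: "dotp a 0 = 0"
  unfolding dotp_def by simp

lemma dotp_0_left [simp]: "dotp 0 a = 0"
  unfolding dotp_def by simp

lemma dotp_axis: "dotp (axis i 1) x = x $ i"
proof -
  have "axis i 1 $ j * x $ j = (if j = i then x $ j else 0)" for j
    by (simp add: axis_def)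
  then show ?thesis
    unfolding dotp_def by (simp add: sum.delta)
qed

lemma vec_eq_iff_dotp: "x = y \<longleftrightarrow> (\<forall>b. dotp b x = dotp b y)"
  by (metis dotp_axis vec_eq_iff)

definition additive_subgroup :: "(bit ^ 'n) set \<Rightarrow> bool" where
  "additive_subgroup G \<longleftrightarrow> 0 \<in> G \<and> (\<forall>x\<in>G. \<forall>y\<in>G. x + y \<in> G)"

lemma additive_subgroup_UNIV [simp]: "additive_subgroup UNIV"
  by (simp add: additive_subgroup_def)

lemma sum_sgn_bit_additive:
  assumes G: "additive_subgroup G"
    and add: "\<And>x y. x \<in> G \<Longrightarrow> y \<in> G \<Longrightarrow> \<phi> (x + y) = \<phi> x + \<phi> y"
  shows "(\<Sum>x\<in>G. sgn_bit (\<phi> x)) = (if \<forall>x\<in>G. \<phi> x = 0 then int (card G) else 0)"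
proof (cases "\<forall>x\<in>G. \<phi> x = 0")
  case False
  then obtain x0 where x0: "x0 \<in> G" "\<phi> x0 = 1" by auto
  have "bij_betw (\<lambda>x. x + x0) G G"
    by (rule bij_betwI [where g = "\<lambda>x. x + x0"]) (use G x0 in \<open>auto simp: additive_subgroup_def\<close>)
  then have "(\<Sum>x\<in>G. sgn_bit (\<phi> x)) = (\<Sum>x\<in>G. sgn_bit (\<phi> (x + x0)))"
    using sum.reindex_bij_betw [of _ G G "\<lambda>x. sgn_bit (\<phi> x)"] by simp
  also have "\<dots> = - (\<Sum>x\<in>G. sgn_bit (\<phi> x))"
    unfolding sum_negf [symmetric] by (rule sum.cong) (simp_all add: add x0 sgn_bit_add)
  finally show ?thesis
    unfolding if_not_P [OF False] by simp
qed simp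

lemma sum_sgn_bit_dotp:
  "(\<Sum>a\<in>UNIV. sgn_bit (dotp a z)) = (if z = 0 then 2 ^ CARD('n) else 0)"
  for z :: "bit ^ 'n"
proof -
  have "(\<forall>a. dotp a z = 0) \<longleftrightarrow> z = 0"
    using vec_eq_iff_dotp [of z 0] by simp
  then show ?thesis
    using sum_sgn_bit_additive [OF additive_subgroup_UNIV, of "\<lambda>a. dotp a z"]
    by (simp add: dotp_add_left card_bit)
qed

lemma card_mult_card_annihilator:
  fixes S :: "(bit ^ 'n) set"
  assumes S: "additive_subgroup S"
  shows "card S * card {b. \<forall>s\<in>S. dotp b s = 0} = 2 ^ CARD('n)"
proof -
  let ?Ann = "{b. \<forall>s\<in>S. dotp b s = 0}"
  have "int (card S * card ?Ann) = (\<Sum>b\<in>UNIV. if b \<in> ?Ann then int (card S) else 0)"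
    by (simp add: sum.If_cases)
  also have "\<dots> = (\<Sum>b\<in>UNIV. \<Sum>s\<in>S. sgn_bit (dotp b s))"
    using sum_sgn_bit_additive [OF S] by (simp add: dotp_add_right)
  also have "\<dots> = (\<Sum>s\<in>S. \<Sum>b\<in>UNIV. sgn_bit (dotp b s))"
    by (rule sum.swap)
  also have "\<dots> = 2 ^ CARD('n)"
    using S by (simp add: sum_sgn_bit_dotp sum.delta additive_subgroup_def)
  finally have "int (card S * card ?Ann) = int (2 ^ CARD('n))"
    by simp
  then show ?thesis
    by (simp only: of_nat_eq_iff)
qed

lemma card_range_mult_card_kernel:
  fixes f :: "'a :: {finite, ab_group_add} \<Rightarrow> 'b :: ab_group_add"
  assumes add: "\<And>x y. f (x + y) = f x + f y"
  shows "card (range f) * card {x. f x = 0} = CARD('a)"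
proof -
  have fibre: "{x. f x = f x0} = (+) x0 ` {x. f x = 0}" for x0
  proof (intro set_eqI iffI)
    fix x
    assume "x \<in> {x. f x = f x0}"
    moreover have "f x = f x0 + f (x - x0)"
      using add [of x0 "x - x0"] by simp
    ultimately show "x \<in> (+) x0 ` {x. f x = 0}"
      by (intro image_eqI [where x = "x - x0"]) simp_all
  qed (auto simp: add)
  have "CARD('a) = card (\<Union>s\<in>range f. {x. f x = s})"
    by (rule arg_cong [where f = card]) auto
  also have "\<dots> = (\<Sum>s\<in>range f. card {x. f x = s})"
    by (rule card_UN_disjoint) auto
  also have "\<dots> = (\<Sum>s\<in>range f. card {x. f x = 0})"
    by (rule sum.cong) (auto simp: fibre card_image)
  finally show ?thesis by simp
qed

lemma sum_UNIV_translate: "(\<Sum>d\<in>UNIV. h (x + d)) = (\<Sum>y\<in>UNIV. h y)"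
  for x :: "'a :: {finite, group_add}"
  by (rule sum.reindex_bij_witness [where i = "\<lambda>y. - x + y" and j = "\<lambda>d. x + d"])
    (simp_all add: add.assoc [symmetric])

section \<open>Walsh spectrum of quadratic functions\<close>

definition polar :: "(bit ^ 'n \<Rightarrow> bit ^ 'n) \<Rightarrow> bit ^ 'n \<Rightarrow> bit ^ 'n \<Rightarrow> bit ^ 'n" where
  "polar F a x = F (x + a) + F x + F a + F 0"

lemma polar_commute: "polar F a x = polar F x a"
  unfolding polar_def by (simp add: ac_simps)

lemma polar_0_left [simp]: "polar F 0 x = 0"
  unfolding polar_def by (simp add: ac_simps)

lemma polar_0_right [simp]: "polar F a 0 = 0"
  unfolding polar_def by (simp add: ac_simps)

lemma bit_polar_monomial:
  fixes q u v u' v' :: bit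
  shows "q * (u + v) * (u' + v') + q * u * u' + q * v * v' = q * (v * u' + u * v')"
  by (cases q; cases u; cases v; cases u'; cases v') simp_all

lemma bit_polar_linear:
  fixes l u v :: bit
  shows "l * (u + v) + l * u + l * v = 0"
  by (cases l; cases u; cases v) simp_all

lemma dotp_polar_quadratic:
  assumes "is_quadratic F"
  obtains q :: "'n::finite \<Rightarrow> 'n \<Rightarrow> bit"
  where "\<And>a x. dotp b (polar F a x) = (\<Sum>i\<in>UNIV. \<Sum>j\<in>UNIV. q i j * (a $ i * x $ j + x $ i * a $ j))"
proof -
  obtain q l e where rep: "\<And>z. component F b z = (\<Sum>i\<in>UNIV. \<Sum>j\<in>UNIV. q i j * z $ i * z $ j)
      + (\<Sum>i\<in>UNIV. l i * z $ i) + e"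
    using assms unfolding is_quadratic_def by blast
  have "dotp b (polar F a x) = (\<Sum>i\<in>UNIV. \<Sum>j\<in>UNIV. q i j * (a $ i * x $ j + x $ i * a $ j))" for a x
  proof -
    have "dotp b (polar F a x)
        = component F b (x + a) + component F b x + component F b a + component F b 0"
      by (simp add: polar_def component_def dotp_add_right)
    also have "\<dots> = (\<Sum>i\<in>UNIV. \<Sum>j\<in>UNIV. q i j * (x $ i + a $ i) * (x $ j + a $ j)
          + q i j * x $ i * x $ j + q i j * a $ i * a $ j)
        + (\<Sum>i\<in>UNIV. l i * (x $ i + a $ i) + l i * x $ i + l i * a $ i) + ((e + e) + (e + e))"
      by (simp add: rep sum.distrib ac_simps)
    also have "\<dots> = (\<Sum>i\<in>UNIV. \<Sum>j\<in>UNIV. q i j * (a $ i * x $ j + x $ i * a $ j))"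
      by (simp only: bit_polar_monomial bit_polar_linear) simp
    finally show ?thesis .
  qed
  then show ?thesis by (rule that)
qed

lemma polar_add_right:
  assumes "is_quadratic F"
  shows "polar F a (x + y) = polar F a x + polar F a y"
proof -
  have "dotp b (polar F a (x + y)) = dotp b (polar F a x + polar F a y)" for b
  proof -
    obtain q where "\<And>a x. dotp b (polar F a x) = (\<Sum>i\<in>UNIV. \<Sum>j\<in>UNIV. q i j * (a $ i * x $ j + x $ i * a $ j))"
      using dotp_polar_quadratic [OF assms] by blast
    then show ?thesis
      by (simp add: dotp_add_right sum.distrib [symmetric] algebra_simps)
  qed
  then show ?thesis
    using vec_eq_iff_dotp by blast
qed

lemma polar_add_left:
  assumes "is_quadratic F"
  shows "polar F (a + a') x = polar F a x + polar F a' x"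
  using polar_add_right [OF assms] polar_commute by metis

lemma component_add:
  "component F b (x + d) = component F b x + component F b d + component F b 0 + dotp b (polar F d x)"
  unfolding polar_def component_def dotp_add_right by (simp add: ac_simps)

text \<open>For quadratic F, \<open>radical F b\<close> is the space of linear structures of F_b; its
  dimension is the k in the amplitude 2^((n+k)/2).\<close>

definition radical :: "(bit ^ 'n \<Rightarrow> bit ^ 'n) \<Rightarrow> bit ^ 'n \<Rightarrow> (bit ^ 'n) set" where
  "radical F b = {a. \<forall>x. dotp b (polar F a x) = 0}"

lemma zero_in_radical [simp]: "0 \<in> radical F b"
  unfolding radical_def by simp

lemma radical_zero [simp]: "radical F 0 = UNIV"
  by (simp add: radical_def)

lemma additive_subgroup_radical:
  assumes "is_quadratic F"
  shows "additive_subgroup (radical F b)"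
  unfolding additive_subgroup_def radical_def by (simp add: polar_add_left [OF assms] dotp_add_right)

lemma walsh_square:
  fixes F :: "bit ^ 'n \<Rightarrow> bit ^ 'n"
  assumes Q: "is_quadratic F"
  shows "(walsh F b a)\<^sup>2 =
    (if \<forall>d\<in>radical F b. component F b d + component F b 0 + dotp d a = 0
     then 2 ^ CARD('n) * int (card (radical F b)) else 0)"
proof -
  let ?f = "component F b" and ?V = "radical F b"
  let ?g = "\<lambda>x. sgn_bit (?f x + dotp x a)"
  let ?\<psi> = "\<lambda>d. ?f d + ?f 0 + dotp d a"
  have product: "?g x * ?g (x + d) = sgn_bit (dotp b (polar F d x)) * sgn_bit (?\<psi> d)" for x d
  proof -
    have "(?f x + dotp x a) + (?f (x + d) + dotp (x + d) a) = dotp b (polar F d x) + ?\<psi> d"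
      by (simp only: component_add dotp_add_left) (simp add: ac_simps)
    then show ?thesis
      by (metis sgn_bit_add)
  qed
  have inner: "(\<Sum>x\<in>UNIV. sgn_bit (dotp b (polar F d x))) = (if d \<in> ?V then 2 ^ CARD('n) else 0)" for d
    using sum_sgn_bit_additive [OF additive_subgroup_UNIV, of "\<lambda>x. dotp b (polar F d x)"]
    by (simp add: polar_add_right [OF Q] dotp_add_right card_bit radical_def)
  have \<psi>_add: "?\<psi> (d + d') = ?\<psi> d + ?\<psi> d'" if "d \<in> ?V" "d' \<in> ?V" for d d'
    using that by (simp add: radical_def component_add dotp_add_left ac_simps)
  have "(walsh F b a)\<^sup>2 = (\<Sum>x\<in>UNIV. \<Sum>y\<in>UNIV. ?g x * ?g y)"
    by (simp add: walsh_def power2_eq_square sum_product)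
  also have "\<dots> = (\<Sum>x\<in>UNIV. \<Sum>d\<in>UNIV. ?g x * ?g (x + d))"
    by (rule sum.cong [OF refl], rule sum_UNIV_translate [symmetric])
  also have "\<dots> = (\<Sum>d\<in>UNIV. (\<Sum>x\<in>UNIV. sgn_bit (dotp b (polar F d x))) * sgn_bit (?\<psi> d))"
    by (subst sum.swap) (simp only: product sum_distrib_right)
  also have "\<dots> = (\<Sum>d\<in>UNIV. if d \<in> ?V then 2 ^ CARD('n) * sgn_bit (?\<psi> d) else 0)"
    by (simp only: inner) (rule sum.cong; simp)
  also have "\<dots> = 2 ^ CARD('n) * (\<Sum>d\<in>?V. sgn_bit (?\<psi> d))"
    by (simp add: sum.If_cases sum_distrib_left)
  also have "\<dots> = (if \<forall>d\<in>?V. ?\<psi> d = 0 then 2 ^ CARD('n) * int (card ?V) else 0)"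
    using sum_sgn_bit_additive [OF additive_subgroup_radical [OF Q, of b], of ?\<psi>] \<psi>_add by simp
  finally show ?thesis .
qed

lemma parseval:
  "(\<Sum>a\<in>UNIV. (walsh F b a)\<^sup>2) = 2 ^ CARD('n) * 2 ^ CARD('n)"
  for F :: "bit ^ 'n \<Rightarrow> bit ^ 'n"
proof -
  let ?f = "component F b"
  have product: "sgn_bit (?f x + dotp x a) * sgn_bit (?f y + dotp y a)
      = sgn_bit (?f x + ?f y) * sgn_bit (dotp a (x + y))" for x y a
  proof -
    have "(?f x + dotp x a) + (?f y + dotp y a) = (?f x + ?f y) + dotp a (x + y)"
      by (simp add: dotp_add_right dotp_commute [of _ a] ac_simps)
    then show ?thesis
      by (metis sgn_bit_add)
  qed
  have "(\<Sum>a\<in>UNIV. (walsh F b a)\<^sup>2)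
      = (\<Sum>a\<in>UNIV. \<Sum>x\<in>UNIV. \<Sum>y\<in>UNIV. sgn_bit (?f x + ?f y) * sgn_bit (dotp a (x + y)))"
    by (simp add: walsh_def power2_eq_square sum_product product)
  also have "\<dots> = (\<Sum>x\<in>UNIV. \<Sum>y\<in>UNIV. \<Sum>a\<in>UNIV. sgn_bit (?f x + ?f y) * sgn_bit (dotp a (x + y)))"
    by (subst sum.swap) (subst (2) sum.swap, rule refl)
  also have "\<dots> = (\<Sum>x\<in>UNIV. \<Sum>y\<in>UNIV. sgn_bit (?f x + ?f y) * (\<Sum>a\<in>UNIV. sgn_bit (dotp a (x + y))))"
    by (simp only: sum_distrib_left)
  also have "\<dots> = (\<Sum>x\<in>UNIV. \<Sum>y\<in>(UNIV :: (bit ^ 'n) set). if y = x then 2 ^ CARD('n) else 0)"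
    by (intro sum.cong refl) (simp add: sum_sgn_bit_dotp bit_vec_add_eq_0_iff eq_commute [of _ x])
  also have "\<dots> = 2 ^ CARD('n) * 2 ^ CARD('n)"
    by (simp add: card_bit)
  finally show ?thesis .
qed

lemma amplitude_square:
  fixes F :: "bit ^ 'n \<Rightarrow> bit ^ 'n"
  assumes Q: "is_quadratic F"
  shows "(amplitude F b)\<^sup>2 = 2 ^ CARD('n) * int (card (radical F b))"
proof -
  let ?K = "2 ^ CARD('n) * int (card (radical F b))"
  have walsh_values: "(walsh F b a)\<^sup>2 \<in> {0, ?K}" for a
    using walsh_square [OF Q, of b a] by simp
  have "amplitude F b \<in> range (\<lambda>a. \<bar>walsh F b a\<bar>)"
    unfolding amplitude_def by (rule Max_in) auto
  then obtain a0 where a0: "amplitude F b = \<bar>walsh F b a0\<bar>"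
    by blast
  have "\<exists>a1. walsh F b a1 \<noteq> 0"
  proof (rule ccontr)
    assume "\<nexists>a1. walsh F b a1 \<noteq> 0"
    then show False
      using parseval [of F b] by simp
  qed
  then obtain a1 where a1: "walsh F b a1 \<noteq> 0"
    by blast
  have "\<bar>walsh F b a1\<bar> \<le> amplitude F b"
    unfolding amplitude_def by (rule Max_ge) auto
  then have "(walsh F b a1)\<^sup>2 \<le> (amplitude F b)\<^sup>2"
    by (metis abs_ge_zero power2_abs power_mono)
  moreover have "(walsh F b a1)\<^sup>2 = ?K"
    using walsh_values [of a1] a1 by simp
  ultimately have "?K \<le> (amplitude F b)\<^sup>2"
    by simp
  moreover have "radical F b \<noteq> {}"
    using zero_in_radical by blast
  then have "card (radical F b) > 0"
    by (simp add: card_gt_0_iff)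
  then have "?K > 0"
    by simp
  ultimately have "(amplitude F b)\<^sup>2 \<noteq> 0"
    by linarith
  then show ?thesis
    using walsh_values [of a0] by (simp add: a0)
qed

lemma amplitude_nonneg: "amplitude F b \<ge> 0"
proof -
  have "\<bar>walsh F b 0\<bar> \<le> amplitude F b"
    unfolding amplitude_def by (rule Max_ge) auto
  then show ?thesis
    by linarith
qed

lemma amplitude_eq_sqrt:
  fixes F :: "bit ^ 'n \<Rightarrow> bit ^ 'n"
  assumes "is_quadratic F"
  shows "real_of_int (amplitude F b) = sqrt (2 ^ CARD('n) * card (radical F b))"
proof -
  have "real_of_int ((amplitude F b)\<^sup>2) = 2 ^ CARD('n) * card (radical F b)"
    by (simp add: amplitude_square [OF assms])
  then show ?thesis
    using amplitude_nonneg [of F b] by (simp add: real_sqrt_unique)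
qed

lemma is_bent_component_iff_card_radical:
  fixes F :: "bit ^ 'n \<Rightarrow> bit ^ 'n"
  assumes "is_quadratic F"
  shows "is_bent_component F b \<longleftrightarrow> card (radical F b) = 1"
proof -
  have "(2::real) powr (real CARD('n) / 2) = sqrt (2 ^ CARD('n))"
    by (simp add: powr_half_sqrt [symmetric] powr_powr powr_realpow [symmetric])
  then show ?thesis
    by (simp add: is_bent_component_def amplitude_eq_sqrt [OF assms])
qed

lemma amplitude_ge_iff_card_radical:
  fixes F :: "bit ^ 'n \<Rightarrow> bit ^ 'n"
  assumes "is_quadratic F" and "CARD('n) = 2 * m"
  shows "2 powr (3 * real CARD('n) / 4) \<le> real_of_int (amplitude F b) \<longleftrightarrow> 2 ^ m \<le> card (radical F b)"
proof -
  have "(2::real) powr (3 * real CARD('n) / 4) = (2 powr real (3 * m)) powr (1 / 2)"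
    by (simp add: assms(2) powr_powr)
  also have "\<dots> = sqrt (2 ^ (2 * m) * 2 ^ m)"
    using powr_realpow [of 2 "3 * m"] by (simp add: powr_half_sqrt power_add [symmetric])
  finally show ?thesis
    by (simp add: amplitude_eq_sqrt [OF assms(1)] assms(2))
qed

section \<open>Radicals of quadratic APN functions\<close>

lemma polar_eq_0_iff:
  fixes F :: "bit ^ 'n \<Rightarrow> bit ^ 'n"
  assumes "is_APN F" and "a \<noteq> 0"
  shows "polar F a x = 0 \<longleftrightarrow> x = 0 \<or> x = a"
proof -
  let ?S = "{x. F x + F (x + a) = F a + F 0}"
  have "{0, a} \<subseteq> ?S"
    by (simp add: add.commute)
  moreover have "card ?S \<le> 2" and "card {0, a} = 2"
    using assms unfolding is_APN_def by simp_all
  ultimately have "{0, a} = ?S"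
    by (intro card_seteq) simp_all
  moreover have "polar F a x = (F x + F (x + a)) + (F a + F 0)"
    unfolding polar_def by (simp add: ac_simps)
  ultimately show ?thesis
    by (auto simp: bit_vec_add_eq_0_iff)
qed

lemma card_radicals_containing:
  fixes F :: "bit ^ 'n \<Rightarrow> bit ^ 'n"
  assumes Q: "is_quadratic F" and "is_APN F" and "a \<noteq> 0"
  shows "card {b. a \<in> radical F b} = 2"
proof -
  let ?R = "range (polar F a)"
  have "additive_subgroup ?R"
    unfolding additive_subgroup_def
    by (auto simp: polar_add_right [OF Q, symmetric]) (metis polar_0_right rangeI)
  then have "card ?R * card {b. \<forall>s\<in>?R. dotp b s = 0} = 2 ^ CARD('n)"
    by (rule card_mult_card_annihilator)
  moreover have "card ?R * card {x. polar F a x = 0} = 2 ^ CARD('n)"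
    using card_range_mult_card_kernel [of "polar F a"] by (simp add: polar_add_right [OF Q] card_bit)
  moreover have "{x. polar F a x = 0} = {0, a}"
    using polar_eq_0_iff [OF assms(2,3)] by auto
  ultimately have "card ?R * card {b. \<forall>s\<in>?R. dotp b s = 0} = card ?R * 2" and "card ?R \<noteq> 0"
    using assms(3) by auto
  moreover have "{b. \<forall>s\<in>?R. dotp b s = 0} = {b. a \<in> radical F b}"
    by (auto simp: radical_def)
  ultimately show ?thesis
    by simp
qed

lemma ex1_radical_containing:
  fixes F :: "bit ^ 'n \<Rightarrow> bit ^ 'n"
  assumes "is_quadratic F" and "is_APN F" and "a \<noteq> 0"
  shows "\<exists>!b. b \<noteq> 0 \<and> a \<in> radical F b"
proof -
  obtain u v where "{b. a \<in> radical F b} = {u, v}" "u \<noteq> v"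
    using card_radicals_containing [OF assms] by (auto simp: card_2_iff)
  moreover have "0 \<in> {b. a \<in> radical F b}"
    by (simp add: radical_def)
  ultimately obtain b where "{b. a \<in> radical F b} = {0, b}" and "b \<noteq> 0"
    by (auto simp: insert_commute)
  then show ?thesis
    by blast
qed

lemma radical_inter_radical:
  fixes F :: "bit ^ 'n \<Rightarrow> bit ^ 'n"
  assumes "is_quadratic F" and "is_APN F" and "b \<noteq> 0" "b' \<noteq> 0" "b \<noteq> b'"
  shows "radical F b \<inter> radical F b' = {0}"
  using ex1_radical_containing [OF assms(1,2)] assms(3-5) by auto

lemma sum_card_radical:
  fixes F :: "bit ^ 'n \<Rightarrow> bit ^ 'n"
  assumes "is_quadratic F" and "is_APN F"
  shows "(\<Sum>b\<in>UNIV - {0}. card (radical F b) - 1) = 2 ^ CARD('n) - 1"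
proof -
  have partition: "UNIV - {0} = (\<Union>b\<in>UNIV - {0}. radical F b - {0 :: bit ^ 'n})"
  proof (intro equalityI subsetI)
    fix a :: "bit ^ 'n"
    assume "a \<in> UNIV - {0}"
    then obtain b where "b \<noteq> 0" "a \<in> radical F b"
      using ex1_radical_containing [OF assms, of a] by auto
    with \<open>a \<in> UNIV - {0}\<close> show "a \<in> (\<Union>b\<in>UNIV - {0}. radical F b - {0})"
      by blast
  qed blast
  have "card (\<Union>b\<in>UNIV - {0}. radical F b - {0 :: bit ^ 'n}) = (\<Sum>b\<in>UNIV - {0}. card (radical F b - {0}))"
    by (rule card_UN_disjoint) (use radical_inter_radical [OF assms] in auto)
  then show ?thesis
    unfolding partition [symmetric] by (simp add: card_bit)
qed

lemma card_mult_card_le_if_inter_trivial: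
  fixes U V :: "(bit ^ 'n) set"
  assumes "additive_subgroup U" "additive_subgroup V" and "U \<inter> V = {0}"
  shows "card U * card V \<le> 2 ^ CARD('n)"
proof -
  have "inj_on (\<lambda>(u, v). u + v) (U \<times> V)"
  proof (rule inj_onI, clarify)
    fix u v u' v'
    assume "u \<in> U" "v \<in> V" "u' \<in> U" "v' \<in> V" and eq: "u + v = u' + v'"
    then have "u + u' \<in> U \<inter> V"
      using assms(1,2) unfolding additive_subgroup_def
      by (metis IntI add.assoc add.commute bit_vec_add_self_left)
    then show "u = u' \<and> v = v'"
      using assms(3) eq by (auto simp: bit_vec_add_eq_0_iff)
  qed
  then have "card (U \<times> V) \<le> CARD(bit ^ 'n)"
    by (rule card_inj_on_le) auto
  then show ?thesis
    by (simp add: card_cartesian_product card_bit)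
qed

lemma partial_spread_sizes:
  fixes v :: "'a \<Rightarrow> nat"
  assumes "finite X" and "m \<ge> 1"
    and ge: "\<And>b. b \<in> X \<Longrightarrow> 2 ^ m \<le> v b"
    and prod: "\<And>b b'. b \<in> X \<Longrightarrow> b' \<in> X \<Longrightarrow> b \<noteq> b' \<Longrightarrow> v b * v b' \<le> 2 ^ (2 * m)"
    and sum: "(\<Sum>b\<in>X. v b - 1) = 2 ^ (2 * m) - 1"
  shows "(card X = 1 \<or> card X = 2 ^ m + 1) \<and> (\<forall>b\<in>X. v b = 2 ^ m \<or> v b = 2 ^ (2 * m))"
proof (cases "\<exists>b\<in>X. 2 ^ m < v b")
  case True
  then obtain b where b: "b \<in> X" "2 ^ m < v b"
    by blast
  have "X = {b}"
  proof (rule ccontr)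
    assume "X \<noteq> {b}"
    then obtain b' where b': "b' \<in> X" "b' \<noteq> b"
      using b(1) by blast
    have "2 ^ m * 2 ^ m < v b * v b'"
      using b(2) ge [OF b'(1)] by (intro mult_less_le_imp_less) simp_all
    then show False
      using prod [OF b(1) b'(1)] b'(2) by (simp add: mult_2 power_add)
  qed
  moreover have "v b = 2 ^ (2 * m)"
  proof -
    have "v b - 1 = 2 ^ (2 * m) - 1"
      using sum by (simp add: \<open>X = {b}\<close>)
    moreover have "1 \<le> v b" and "(1::nat) \<le> 2 ^ (2 * m)"
      using ge [OF b(1)] one_le_power [of "2::nat" m] one_le_power [of "2::nat" "2 * m"] by linarith+
    ultimately show ?thesis
      by linarith
  qed
  ultimately show ?thesis
    by simp
next
  case False
  then have v: "\<forall>b\<in>X. v b = 2 ^ m"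
    using ge by force
  moreover have "(2::nat) ^ (2 * m) - 1 = (2 ^ m + 1) * (2 ^ m - 1)"
    using one_le_power [of "2::nat" m]
    by (simp add: algebra_simps diff_mult_distrib2 flip: power_add) (simp add: mult_2_right)
  ultimately have "card X * (2 ^ m - 1) = (2 ^ m + 1) * (2 ^ m - 1)"
    using sum by simp
  moreover have "(0::nat) < 2 ^ m - 1"
    using one_less_power [of "2::nat" m] \<open>m \<ge> 1\<close> by simp
  ultimately have "card X = 2 ^ m + 1"
    by (metis mult_right_cancel neq0_conv)
  then show ?thesis
    using v by simp
qed

section \<open>Walsh coefficients at zero\<close>

lemma power_dvd_walsh:
  fixes F :: "bit ^ 'n \<Rightarrow> bit ^ 'n"
  assumes "is_quadratic F" and "CARD('n) = 2 * m" and "2 ^ (2 * k) dvd card (radical F b)"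
  shows "2 ^ (m + k) dvd walsh F b a"
proof -
  have "int (2 ^ (2 * k)) dvd int (card (radical F b))"
    using assms(3) by (simp only: int_dvd_int_iff)
  then have "2 ^ (2 * m) * 2 ^ (2 * k) dvd (2::int) ^ (2 * m) * int (card (radical F b))"
    by (simp add: mult_dvd_mono)
  moreover have "(2 ^ (m + k))\<^sup>2 = (2::int) ^ (2 * m) * 2 ^ (2 * k)"
    by (simp add: power_add power_mult_distrib flip: power_mult) (simp add: mult.commute)
  ultimately have "(2 ^ (m + k))\<^sup>2 dvd (2::int) ^ CARD('n) * int (card (radical F b))"
    by (simp add: assms(2))
  then have "(2 ^ (m + k))\<^sup>2 dvd (walsh F b a)\<^sup>2"
    by (simp add: walsh_square [OF assms(1)])
  then show ?thesis
    by simp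
qed

lemma not_power_Suc_dvd_walsh_bent:
  fixes F :: "bit ^ 'n \<Rightarrow> bit ^ 'n"
  assumes "is_quadratic F" and "CARD('n) = 2 * m" and "card (radical F b) = 1"
  shows "\<not> 2 ^ Suc m dvd walsh F b a"
proof
  have "radical F b = {0}"
    using assms(3) zero_in_radical [of F b] by (metis card_1_singletonE singletonD)
  then have "\<bar>walsh F b a\<bar>\<^sup>2 = (2 ^ m)\<^sup>2"
    using walsh_square [OF assms(1), of b a] by (simp add: assms(2) power_mult [symmetric] mult.commute)
  then have abs_walsh: "\<bar>walsh F b a\<bar> = 2 ^ m"
    using abs_ge_zero power2_eq_iff_nonneg by (metis zero_le_numeral zero_le_power)
  assume "2 ^ Suc m dvd walsh F b a"
  moreover have "walsh F b a \<noteq> 0"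
    using abs_walsh by auto
  ultimately have "\<bar>2 ^ Suc m\<bar> \<le> \<bar>walsh F b a\<bar>"
    by (intro dvd_imp_le_int)
  then show False
    using abs_walsh by simp
qed

lemma power_Suc_dvd_walsh_iff:
  fixes F :: "bit ^ 'n \<Rightarrow> bit ^ 'n"
  assumes Q: "is_quadratic F" and n: "CARD('n) = 2 * m" "2 \<le> m"
    and sizes: "card (radical F b) \<in> {1, 2 ^ m, 2 ^ (2 * m)}"
  shows "2 ^ Suc m dvd walsh F b a \<longleftrightarrow> card (radical F b) \<noteq> 1"
proof
  show "card (radical F b) \<noteq> 1" if "2 ^ Suc m dvd walsh F b a"
    using that not_power_Suc_dvd_walsh_bent [OF Q n(1)] by blast
next
  assume "card (radical F b) \<noteq> 1"
  then have "2 ^ (2 * 1) dvd card (radical F b)"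
    using sizes n(2) le_imp_power_dvd [of 2 m "2::nat"] le_imp_power_dvd [of 2 "2 * m" "2::nat"] by auto
  then show "2 ^ Suc m dvd walsh F b a"
    using power_dvd_walsh [OF Q n(1), of 1] by simp
qed

lemma sum_walsh_zero_subgroup:
  assumes "additive_subgroup E"
  shows "(\<Sum>b\<in>E. walsh F b 0) = int (card E) * int (card {x. \<forall>b\<in>E. dotp b (F x) = 0})"
proof -
  have "(\<Sum>b\<in>E. walsh F b 0) = (\<Sum>x\<in>UNIV. \<Sum>b\<in>E. sgn_bit (dotp b (F x)))"
    unfolding walsh_def component_def by (simp add: sum.swap [of _ E])
  also have "\<dots> = (\<Sum>x\<in>UNIV. if \<forall>b\<in>E. dotp b (F x) = 0 then int (card E) else 0)"
    using sum_sgn_bit_additive [OF assms] by (simp add: dotp_add_left)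
  finally show ?thesis
    by (simp add: sum.If_cases)
qed

lemma even_card_not_power_dvd:
  fixes f :: "'a \<Rightarrow> int"
  assumes "finite E" and "2 ^ Suc k dvd (\<Sum>b\<in>E. f b)" and "\<And>b. b \<in> E \<Longrightarrow> 2 ^ k dvd f b"
  shows "even (card {b\<in>E. \<not> 2 ^ Suc k dvd f b})"
proof -
  define g where "g b = f b div 2 ^ k" for b
  have f_eq: "f b = 2 ^ k * g b" if "b \<in> E" for b
    using assms(3) [OF that] by (simp add: g_def)
  have "(\<Sum>b\<in>E. f b) = 2 ^ k * (\<Sum>b\<in>E. g b)"
    by (simp add: f_eq sum_distrib_left)
  then have "even (\<Sum>b\<in>E. g b)"
    using assms(2) by simp
  moreover have "{b\<in>E. \<not> 2 ^ Suc k dvd f b} = {b\<in>E. odd (g b)}"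
    by (auto simp: f_eq)
  ultimately show ?thesis
    using assms(1) by (simp add: even_sum_iff)
qed

definition meets_evenly :: "nat \<Rightarrow> (bit ^ 'n) set \<Rightarrow> bool" where
  "meets_evenly k Y \<longleftrightarrow>
    (\<forall>E j. additive_subgroup E \<longrightarrow> card E = 2 ^ j \<longrightarrow> k \<le> j \<longrightarrow> even (card (Y \<inter> E)))"

lemma meets_evenly_walsh_dvd:
  fixes F :: "bit ^ 'n \<Rightarrow> bit ^ 'n"
  assumes "is_quadratic F" and "CARD('n) = 2 * m"
  shows "meets_evenly (Suc m) {b. 2 ^ Suc m dvd walsh F b 0}"
  unfolding meets_evenly_def
proof (intro allI impI)
  fix E :: "(bit ^ 'n) set" and j
  assume E: "additive_subgroup E" and card_E: "card E = 2 ^ j" and "Suc m \<le> j"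
  let ?Y = "{b. 2 ^ Suc m dvd walsh F b 0}"
  have "(2::int) ^ Suc m dvd int (card E)"
    using le_imp_power_dvd [OF \<open>Suc m \<le> j\<close>, of "2::int"] by (simp add: card_E)
  then have "2 ^ Suc m dvd (\<Sum>b\<in>E. walsh F b 0)"
    by (simp add: sum_walsh_zero_subgroup [OF E])
  moreover have "2 ^ m dvd walsh F b 0" for b
    using power_dvd_walsh [OF assms, of 0] by simp
  ultimately have "even (card (E - ?Y))"
    using even_card_not_power_dvd [of E m "\<lambda>b. walsh F b 0"] by (simp add: set_diff_eq)
  moreover have "even (card E)"
    using \<open>Suc m \<le> j\<close> by (simp add: card_E)
  moreover have "card E = card (?Y \<inter> E) + card (E - ?Y)"
    by (metis Int_commute card_Int_Diff finite)
  ultimately show "even (card (?Y \<inter> E))"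
    by simp
qed

section \<open>Sets meeting all large subgroups evenly\<close>

lemma additive_subgroup_union_coset:
  assumes W: "additive_subgroup W" and "v \<notin> W"
  shows "additive_subgroup (W \<union> (+) v ` W)"
    and "W \<inter> (+) v ` W = {}"
    and "card (W \<union> (+) v ` W) = 2 * card W"
proof -
  have mem: "z \<in> W \<union> (+) v ` W \<longleftrightarrow> z \<in> W \<or> v + z \<in> W" for z
    by (auto simp: image_iff) (metis bit_vec_add_self_left)
  have closed: "x + y \<in> W" if "x \<in> W" "y \<in> W" for x y
    using W that by (simp add: additive_subgroup_def)
  show "additive_subgroup (W \<union> (+) v ` W)"
    unfolding additive_subgroup_def mem
    using W closed [of "v + _" "v + _"] closed [of "v + _"] closed [of _ "v + _"]
    by (auto simp: additive_subgroup_def ac_simps)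
  show disjoint: "W \<inter> (+) v ` W = {}"
    using closed \<open>v \<notin> W\<close> by (auto simp: add.assoc [symmetric]) (metis bit_vec_add_self_right)
  have "card ((+) v ` W) = card W"
    by (rule card_image) (simp add: inj_on_def)
  then show "card (W \<union> (+) v ` W) = 2 * card W"
    using disjoint by (simp add: card_Un_disjoint)
qed

lemma additive_subgroup_span_pair: "additive_subgroup {0, a, b, a + b}"
  for a b :: "bit ^ 'n"
proof -
  have "a + (a + b) = b" "b + (a + b) = a" "a + b + a = b" "a + b + b = a" "b + a = a + b"
    by (simp_all add: add.commute add.left_commute)
  then show ?thesis
    unfolding additive_subgroup_def by auto
qed

lemma coset_add_eq:
  assumes "additive_subgroup P" and "p \<in> P"
  shows "(+) (t + p) ` P = (+) t ` P"
proof -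
  have closed: "x + y \<in> P" if "x \<in> P" "y \<in> P" for x y
    using assms(1) that by (simp add: additive_subgroup_def)
  show ?thesis
  proof (intro equalityI image_subsetI)
    show "t + p + x \<in> (+) t ` P" if "x \<in> P" for x
      using closed [OF assms(2) that] by (simp add: add.assoc)
    show "t + x \<in> (+) (t + p) ` P" if "x \<in> P" for x
      using closed [OF assms(2) that] image_eqI [of "t + x" "(+) (t + p)" "p + x"] by (simp add: add.assoc)
  qed
qed

lemma even_card_iff_even_card_odd_classes:
  assumes "finite T" and R: "equiv T R"
  shows "even (card T) \<longleftrightarrow> even (card {y\<in>T. odd (card (R `` {y}))})"
proof -
  let ?Q = "{C \<in> T // R. odd (card C)}"
  have card_Union: "card (\<Union>S) = (\<Sum>C\<in>S. card C)" if "S \<subseteq> T // R" for S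
  proof (rule card_Union_disjoint)
    show "finite C" if "C \<in> S" for C
      using that \<open>S \<subseteq> T // R\<close> assms(1) equiv_type [OF R] by (blast intro: finite_equiv_class)
  qed (use that quotient_disj [OF R] in \<open>auto simp: pairwise_def disjnt_def\<close>)
  have finite_Q: "finite (T // R)"
    using assms(1) equiv_type [OF R] by (rule finite_quotient)
  have "{y\<in>T. odd (card (R `` {y}))} = \<Union>?Q"
  proof (intro equalityI subsetI)
    fix y
    assume "y \<in> {y\<in>T. odd (card (R `` {y}))}"
    then show "y \<in> \<Union>?Q"
      using equiv_class_self [OF R] quotientI [of y T R] by blast
  next
    fix y
    assume "y \<in> \<Union>?Q"
    then obtain x where "x \<in> T" "y \<in> R `` {x}" "odd (card (R `` {x}))"
      by (auto elim: quotientE)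
    then show "y \<in> {y\<in>T. odd (card (R `` {y}))}"
      using equiv_class_eq [OF R, of x y] equiv_type [OF R] by auto
  qed
  then have "even (card {y\<in>T. odd (card (R `` {y}))}) \<longleftrightarrow> even (card ?Q)"
    using finite_Q by (simp add: card_Union even_sum_iff)
  moreover have "even (card T) \<longleftrightarrow> even (card ?Q)"
    using card_Union [of "T // R"] finite_Q by (simp add: Union_quotient [OF R] even_sum_iff)
  ultimately show ?thesis
    by simp
qed

lemma even_card_iff_even_card_odd_cosets:
  fixes T :: "(bit ^ 'n) set"
  assumes P: "additive_subgroup P"
  shows "even (card T) \<longleftrightarrow> even (card {y\<in>T. odd (card (T \<inter> (+) y ` P))})"
proof -
  let ?R = "{(x, y). x \<in> T \<and> y \<in> T \<and> x + y \<in> P}"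
  have closed: "x + y \<in> P" if "x \<in> P" "y \<in> P" for x y
    using P that by (simp add: additive_subgroup_def)
  have "equiv T ?R"
    unfolding equiv_def refl_on_def sym_def trans_def
    using P closed by (auto simp: additive_subgroup_def add.commute) (metis add.assoc bit_vec_add_self_left)
  moreover have "{y\<in>T. odd (card (?R `` {y}))} = {y\<in>T. odd (card (T \<inter> (+) y ` P))}"
  proof (rule Collect_cong)
    fix y
    have coset: "y \<in> T \<Longrightarrow> ?R `` {y} = T \<inter> (+) y ` P"
      by (auto simp: image_iff) (metis bit_vec_add_self_left)
    show "y \<in> T \<and> odd (card (?R `` {y})) \<longleftrightarrow> y \<in> T \<and> odd (card (T \<inter> (+) y ` P))"
      by (rule conj_cong [OF refl]) (simp only: coset)
  qed
  ultimately show ?thesis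
    using even_card_iff_even_card_odd_classes [of T ?R] by (simp only: finite)
qed

lemma meets_evenly_coset:
  assumes Y: "meets_evenly k Y" and W: "additive_subgroup W" "card W = 2 ^ j" and "k \<le> j"
  shows "even (card (Y \<inter> (+) t ` W))"
proof (cases "t \<in> W")
  case True
  then have "(+) t ` W = W"
    using coset_add_eq [OF W(1) True, of 0] by simp
  then show ?thesis
    using Y W \<open>k \<le> j\<close> by (simp add: meets_evenly_def)
next
  case False
  note union = additive_subgroup_union_coset [OF W(1) False]
  have "even (card (Y \<inter> (W \<union> (+) t ` W)))"
    using Y union(1,3) W(2) \<open>k \<le> j\<close> unfolding meets_evenly_def
    by (metis le_SucI power_Suc)
  moreover have "even (card (Y \<inter> W))"
    using Y W \<open>k \<le> j\<close> by (simp add: meets_evenly_def)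
  moreover have "card (Y \<inter> (W \<union> (+) t ` W)) = card (Y \<inter> W) + card (Y \<inter> (+) t ` W)"
    using union(2) by (simp add: Int_Un_distrib card_Un_disjoint disjoint_iff)
  ultimately show ?thesis
    by simp
qed

lemma four_dvd_card_translation_invariant:
  fixes Y :: "(bit ^ 'n) set"
  assumes Y: "meets_evenly k Y" and "k < CARD('n)"
    and "c \<noteq> 0" and invariant: "\<And>y. y \<in> Y \<Longrightarrow> y + c \<in> Y"
  shows "4 dvd card Y"
proof -
  obtain i where "c $ i = 1"
    using \<open>c \<noteq> 0\<close> by (metis bit_not_zero_iff vec_eq_iff zero_index)
  then have wc: "dotp (axis i 1) c = 1"
    by (simp add: dotp_axis)
  define H where "H = {x. dotp (axis i 1) x = 0}"
  have "additive_subgroup {0, axis i (1::bit)}"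
    by (simp add: additive_subgroup_def)
  then have "card {0, axis i (1::bit)} * card H = 2 ^ CARD('n)"
    using card_mult_card_annihilator [of "{0, axis i 1}"] by (simp add: H_def dotp_commute)
  then have "card H = 2 ^ (CARD('n) - 1)"
    using \<open>k < CARD('n)\<close> by (simp add: axis_eq_0_iff power_eq_if)
  moreover have "additive_subgroup H"
    by (simp add: additive_subgroup_def H_def dotp_add_right)
  ultimately have "even (card (Y \<inter> H))"
    using Y \<open>k < CARD('n)\<close> unfolding meets_evenly_def by auto
  moreover have "bij_betw (\<lambda>y. y + c) (Y \<inter> H) (Y - H)"
    by (rule bij_betwI [where g = "\<lambda>y. y + c"]) (auto simp: H_def dotp_add_right wc invariant)
  then have "card (Y - H) = card (Y \<inter> H)"
    by (simp add: bij_betw_same_card)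
  then have "card Y = 2 * card (Y \<inter> H)"
    by (metis card_Int_Diff finite mult_2)
  ultimately show ?thesis
    by auto
qed

lemma exists_subgroup_extension_avoiding:
  fixes W0 :: "(bit ^ 'n) set"
  assumes "additive_subgroup W0" "card W0 = 2 ^ j" "j \<le> Suc k" "W0 \<inter> B = {}"
    and small: "2 ^ k * (card B + 1) < 2 ^ CARD('n)"
  shows "\<exists>W. additive_subgroup W \<and> W0 \<subseteq> W \<and> card W = 2 ^ Suc k \<and> W \<inter> B = {}"
  using assms(1-4)
proof (induction "Suc k - j" arbitrary: W0 j)
  case 0
  then show ?case
    by (metis diff_is_0_eq le_antisym order_refl)
next
  case (Suc d)
  define forbidden where "forbidden = W0 \<union> (\<lambda>(\<beta>, w). \<beta> + w) ` (B \<times> W0)"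
  have "card forbidden \<le> card W0 + card (B \<times> W0)"
    unfolding forbidden_def by (meson add_le_mono card_Un_le card_image_le finite le_trans order_refl)
  also have "\<dots> = 2 ^ j * (card B + 1)"
    using Suc.prems(2) by (simp add: card_cartesian_product algebra_simps)
  also have "\<dots> \<le> 2 ^ k * (card B + 1)"
    using Suc.hyps(2) by (intro mult_le_mono1 power_increasing) arith+
  finally have "card forbidden < CARD(bit ^ 'n)"
    using small by (simp add: card_bit)
  then obtain v where v: "v \<notin> forbidden"
    by (metis UNIV_I card_mono finite not_le subsetI)
  then have "v \<notin> W0"
    by (simp add: forbidden_def)
  note union = additive_subgroup_union_coset [OF Suc.prems(1) this]
  have "(W0 \<union> (+) v ` W0) \<inter> B = {}"
    using Suc.prems(4) v unfolding forbidden_def by (fastforce simp: image_iff)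
  moreover have "d = Suc k - Suc j" and "Suc j \<le> Suc k"
    using Suc.hyps(2) by arith+
  ultimately obtain W where "additive_subgroup W" "W0 \<union> (+) v ` W0 \<subseteq> W" "card W = 2 ^ Suc k" "W \<inter> B = {}"
    using Suc.hyps(1) [of "Suc j" "W0 \<union> (+) v ` W0"] union(1,3) Suc.prems(2) by auto
  then show ?case
    by blast
qed

lemma odd_cosets_inter_coset:
  fixes Y P W :: "(bit ^ 'n) set"
  assumes P: "additive_subgroup P" and W: "additive_subgroup W" "P \<subseteq> W"
    and odd_t: "odd (card (Y \<inter> (+) t ` P))"
    and avoid: "\<And>y. y \<in> Y \<Longrightarrow> odd (card (Y \<inter> (+) y ` P)) \<Longrightarrow> y + t \<in> W \<Longrightarrow> y + t \<in> P"
  defines "T \<equiv> Y \<inter> (+) t ` W"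
  shows "{y\<in>T. odd (card (T \<inter> (+) y ` P))} = Y \<inter> (+) t ` P"
proof -
  have same_class: "T \<inter> (+) y ` P = Y \<inter> (+) y ` P" if y: "y \<in> T" for y
  proof -
    obtain w where "w \<in> W" "y = t + w"
      using y by (auto simp: T_def)
    moreover have "w + p \<in> W" if "p \<in> P" for p
      using W \<open>w \<in> W\<close> that by (auto simp: additive_subgroup_def)
    ultimately have "(+) y ` P \<subseteq> (+) t ` W"
      by (auto simp: add.assoc)
    then show ?thesis
      by (auto simp: T_def)
  qed
  show ?thesis
  proof (intro equalityI subsetI)
    fix y
    assume "y \<in> {y\<in>T. odd (card (T \<inter> (+) y ` P))}"
    then have "y \<in> Y" "odd (card (Y \<inter> (+) y ` P))" "y \<in> (+) t ` W"
      using same_class [of y] by (auto simp: T_def)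
    moreover have "y = t + (y + t)"
      by (metis add.commute bit_vec_add_self_left)
    ultimately have "y + t \<in> P"
      using avoid by (metis bit_vec_add_self_left imageE)
    then show "y \<in> Y \<inter> (+) t ` P"
      using \<open>y \<in> Y\<close> \<open>y = t + (y + t)\<close> image_eqI [of y "(+) t" "y + t" P] by blast
  next
    fix y
    assume "y \<in> Y \<inter> (+) t ` P"
    then obtain p where "p \<in> P" "y = t + p" "y \<in> Y"
      by auto
    moreover have "y \<in> T"
      using calculation W(2) by (auto simp: T_def)
    ultimately show "y \<in> {y\<in>T. odd (card (T \<inter> (+) y ` P))}"
      using coset_add_eq [OF P, of p t] same_class [of y] odd_t by simp
  qed
qed

lemma card_odd_cosets_ge:
  fixes Y P :: "(bit ^ 'n) set"
  assumes n: "CARD('n) = 2 * m" and Y: "meets_evenly (Suc m) Y"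
    and P: "additive_subgroup P" "card P = 2 ^ p" "p \<le> Suc m"
    and t: "t \<in> Y" "odd (card (Y \<inter> (+) t ` P))"
  shows "2 ^ m \<le> card {y\<in>Y. odd (card (Y \<inter> (+) y ` P))}"
proof (rule ccontr)
  define odd_points where "odd_points = {y\<in>Y. odd (card (Y \<inter> (+) y ` P))}"
  assume "\<not> 2 ^ m \<le> card {y\<in>Y. odd (card (Y \<inter> (+) y ` P))}"
  then have few: "card odd_points < 2 ^ m"
    by (simp add: odd_points_def)
  \<comment> \<open>W must avoid B so that t + W contains no odd point outside t + P.\<close>
  define B where "B = (\<lambda>y. y + t) ` {y\<in>odd_points. y + t \<notin> P}"
  have "0 \<in> P"
    using P(1) by (simp add: additive_subgroup_def)
  then have "card B \<le> card (odd_points - {t})"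
    unfolding B_def by (intro order.trans [OF card_image_le] card_mono) auto
  moreover have "t \<in> odd_points"
    using t by (simp add: odd_points_def)
  ultimately have "card B + 1 < 2 ^ m"
    using few card_Diff_singleton [of t odd_points] card_gt_0_iff [of odd_points] by fastforce
  then have "2 ^ m * (card B + 1) < 2 ^ m * 2 ^ m"
    by (intro mult_strict_left_mono) simp_all
  then have "2 ^ m * (card B + 1) < 2 ^ CARD('n)"
    by (simp add: n mult_2 power_add)
  moreover have "P \<inter> B = {}"
    by (auto simp: B_def)
  ultimately obtain W where W: "additive_subgroup W" "P \<subseteq> W" "card W = 2 ^ Suc m" "W \<inter> B = {}"
    using exists_subgroup_extension_avoiding [OF P] by blast
  have "y + t \<in> P" if "y \<in> Y" "odd (card (Y \<inter> (+) y ` P))" "y + t \<in> W" for y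
    using that W(4) unfolding B_def odd_points_def by blast
  then have "{y\<in>Y \<inter> (+) t ` W. odd (card (Y \<inter> (+) t ` W \<inter> (+) y ` P))} = Y \<inter> (+) t ` P"
    using odd_cosets_inter_coset [OF P(1) W(1,2) t(2)] by blast
  moreover have "even (card (Y \<inter> (+) t ` W))"
    using meets_evenly_coset [OF Y W(1,3)] by simp
  ultimately show False
    using t(2) even_card_iff_even_card_odd_cosets [OF P(1), of "Y \<inter> (+) t ` W"] by simp
qed

lemma card_translate_pairs_le:
  fixes Y :: "(bit ^ 'n) set"
  assumes n: "CARD('n) = 2 * m" and Y: "meets_evenly (Suc m) Y"
    and "c \<noteq> 0" and "{y\<in>Y. y + c \<in> Y} \<noteq> Y"
  shows "card {y\<in>Y. y + c \<in> Y} + 2 ^ m \<le> card Y"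
proof -
  let ?Z = "{y\<in>Y. y + c \<in> Y}" and ?P = "{0, c}"
  obtain t where t: "t \<in> Y" "t + c \<notin> Y"
    using assms(4) by blast
  have P: "additive_subgroup ?P" "card ?P = 2 ^ 1"
    using \<open>c \<noteq> 0\<close> by (auto simp: additive_subgroup_def)
  have "y \<noteq> y + c" for y
    using \<open>c \<noteq> 0\<close> by (metis add_0_right add_left_cancel)
  then have "odd (card (Y \<inter> (+) y ` ?P)) \<longleftrightarrow> y + c \<notin> Y" if "y \<in> Y" for y
    using that by (cases "y + c \<in> Y") (auto simp: Int_insert_left)
  then have "{y\<in>Y. odd (card (Y \<inter> (+) y ` ?P))} = Y - ?Z" and "odd (card (Y \<inter> (+) t ` ?P))"
    using t by blast+
  then have "2 ^ m \<le> card (Y - ?Z)"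
    using card_odd_cosets_ge [OF n Y P _ t(1)] by simp
  moreover have "card ?Z \<le> card Y"
    by (rule card_mono) auto
  ultimately show ?thesis
    by (simp add: card_Diff_subset)
qed

section \<open>Sidon sets\<close>

text \<open>Equivalently, distinct pairs of elements of Y have distinct sums.\<close>

definition sidon :: "(bit ^ 'n) set \<Rightarrow> bool" where
  "sidon Y \<longleftrightarrow> (\<forall>c. c \<noteq> 0 \<longrightarrow> card {y\<in>Y. y + c \<in> Y} \<le> 2)"

lemma sidon_if_meets_evenly:
  fixes Y :: "(bit ^ 'n) set"
  assumes n: "CARD('n) = 2 * m" "2 \<le> m" and Y: "meets_evenly (Suc m) Y"
    and card_Y: "card Y = 2 ^ m + 2"
  shows "sidon Y"
  unfolding sidon_def
proof (intro allI impI)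
  fix c :: "bit ^ 'n"
  assume "c \<noteq> 0"
  have "(4::nat) dvd 2 ^ m"
    using le_imp_power_dvd [OF n(2), of "2::nat"] by simp
  then have "\<not> 4 dvd card Y"
    unfolding card_Y by (simp only: dvd_add_right_iff) simp
  then have "{y\<in>Y. y + c \<in> Y} \<noteq> Y"
    using four_dvd_card_translation_invariant [OF Y _ \<open>c \<noteq> 0\<close>] n by auto
  then show "card {y\<in>Y. y + c \<in> Y} \<le> 2"
    using card_translate_pairs_le [OF n(1) Y \<open>c \<noteq> 0\<close>] card_Y by simp
qed

lemma sidonD:
  assumes "sidon Y" and "y1 \<in> Y" "y2 \<in> Y" "y3 \<in> Y" "y4 \<in> Y" "y1 \<noteq> y2" and "y1 + y2 = y3 + y4"
  shows "y3 = y1 \<or> y3 = y2"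
proof (rule ccontr)
  let ?c = "y1 + y2"
  assume "\<not> (y3 = y1 \<or> y3 = y2)"
  then have three: "card {y1, y2, y3} = 3"
    using assms(6) by (auto simp: card_insert_if)
  have "y1 + ?c = y2" "y2 + ?c = y1"
    by (simp_all add: add.left_commute)
  moreover have "y3 + ?c = y4"
    by (simp add: assms(7))
  ultimately have "{y1, y2, y3} \<subseteq> {y\<in>Y. y + ?c \<in> Y}"
    using assms(2-5) by auto
  then have "3 \<le> card {y\<in>Y. y + ?c \<in> Y}"
    using card_mono [of "{y\<in>Y. y + ?c \<in> Y}" "{y1, y2, y3}"] three by simp
  moreover have "?c \<noteq> 0"
    using assms(6) by (simp add: bit_vec_add_eq_0_iff)
  ultimately show False
    using \<open>sidon Y\<close> unfolding sidon_def by fastforce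
qed

lemma sidon_translate_not_mem:
  assumes "sidon Y" and "u \<in> Y" "v \<in> Y" "u \<noteq> v" and "w \<in> Y" "w \<noteq> u" "w \<noteq> v"
  shows "w + (u + v) \<notin> Y"
proof
  assume mem: "w + (u + v) \<in> Y"
  have "w \<noteq> w + (u + v)"
    using assms(4) by (simp add: bit_vec_add_eq_0_iff)
  then have "u = w \<or> u = w + (u + v)"
    using sidonD [OF assms(1) assms(5) mem assms(2,3)] by simp
  then show False
    using assms(6,7) by (metis add.commute bit_vec_add_self_left)
qed

lemma sidon_card_le_if_even_cosets:
  fixes Y P :: "(bit ^ 'n) set"
  assumes "sidon Y" and "0 \<in> P" and even: "\<And>y. y \<in> Y \<Longrightarrow> even (card (Y \<inter> (+) y ` P))"
  shows "card Y \<le> 2 * (card P - 1)"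
proof -
  have "Y \<subseteq> (\<Union>p\<in>P - {0}. {y\<in>Y. y + p \<in> Y})"
  proof
    fix y
    assume "y \<in> Y"
    then have "y \<in> Y \<inter> (+) y ` P"
      using \<open>0 \<in> P\<close> by (metis IntI add_0_right image_eqI)
    moreover have "Y \<inter> (+) y ` P \<noteq> {y}"
      using even [OF \<open>y \<in> Y\<close>] by auto
    ultimately obtain p where "p \<in> P" "y + p \<in> Y" "y + p \<noteq> y"
      by blast
    then show "y \<in> (\<Union>p\<in>P - {0}. {y\<in>Y. y + p \<in> Y})"
      using \<open>y \<in> Y\<close> by auto
  qed
  then have "card Y \<le> card (\<Union>p\<in>P - {0}. {y\<in>Y. y + p \<in> Y})"
    by (rule card_mono [rotated]) simp
  also have "\<dots> \<le> (\<Sum>p\<in>P - {0}. card {y\<in>Y. y + p \<in> Y})"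
    by (rule card_UN_le) simp
  also have "\<dots> \<le> (\<Sum>p\<in>P - {0}. 2)"
    using \<open>sidon Y\<close> by (intro sum_mono) (simp add: sidon_def)
  finally show ?thesis
    using \<open>0 \<in> P\<close> by (simp add: mult.commute)
qed

lemma sidon_card_coset_pair:
  fixes Y :: "(bit ^ 'n) set"
  assumes "sidon Y" and "y1 \<in> Y" "y2 \<in> Y" "y3 \<in> Y" "y4 \<in> Y" and "distinct [y1, y2, y3, y4]"
  shows "card (Y \<inter> (+) y1 ` {0, y1 + y2, y3 + y4, y1 + y2 + (y3 + y4)}) = 2"
proof -
  have "(+) y1 ` {0, y1 + y2, y3 + y4, y1 + y2 + (y3 + y4)} = {y1, y2, y1 + (y3 + y4), y2 + (y3 + y4)}"
    by (simp add: add.assoc [symmetric])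
  moreover have "y1 + (y3 + y4) \<notin> Y" "y2 + (y3 + y4) \<notin> Y"
    using sidon_translate_not_mem [OF assms(1,4,5)] assms by auto
  ultimately have "Y \<inter> (+) y1 ` {0, y1 + y2, y3 + y4, y1 + y2 + (y3 + y4)} = {y1, y2}"
    using assms(2,3) by auto
  then show ?thesis
    using assms(6) by simp
qed

lemma sidon_card_cosets_four_points:
  fixes Y :: "(bit ^ 'n) set"
  assumes "sidon Y" and y: "y1 \<in> Y" "y2 \<in> Y" "y3 \<in> Y" "y4 \<in> Y" "distinct [y1, y2, y3, y4]"
    and "y \<in> {y1, y2, y3, y4}"
  shows "card (Y \<inter> (+) y ` {0, y1 + y2, y3 + y4, y1 + y2 + (y3 + y4)}) = 2"
proof -
  let ?P = "{0, y1 + y2, y3 + y4, y1 + y2 + (y3 + y4)}"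
  have P_eqs: "?P = {0, y2 + y1, y3 + y4, y2 + y1 + (y3 + y4)}"
    "?P = {0, y3 + y4, y1 + y2, y3 + y4 + (y1 + y2)}" "?P = {0, y4 + y3, y1 + y2, y4 + y3 + (y1 + y2)}"
    by (auto simp: ac_simps)
  from \<open>y \<in> {y1, y2, y3, y4}\<close> consider "y = y1" | "y = y2" | "y = y3" | "y = y4"
    by blast
  then show ?thesis
  proof cases
    case 1
    then show ?thesis
      using sidon_card_coset_pair [OF assms(1) y] by simp
  next
    case 2
    then show ?thesis
      using sidon_card_coset_pair [OF assms(1) y(2,1,3,4)] y(5) P_eqs(1) by auto
  next
    case 3
    then show ?thesis
      using sidon_card_coset_pair [OF assms(1) y(3,4,1,2)] y(5) P_eqs(2) by auto
  next
    case 4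
    then show ?thesis
      using sidon_card_coset_pair [OF assms(1) y(4,3,1,2)] y(5) P_eqs(3) by auto
  qed
qed

lemma sidon_exists_subgroup_few_odd_cosets:
  fixes Y :: "(bit ^ 'n) set"
  assumes "sidon Y" and "7 \<le> card Y"
  obtains P where "additive_subgroup P" "card P = 2 ^ 2"
    and "{y\<in>Y. odd (card (Y \<inter> (+) y ` P))} \<noteq> {}"
    and "card {y\<in>Y. odd (card (Y \<inter> (+) y ` P))} + 4 \<le> card Y"
proof -
  obtain y1 y2 y3 y4 where y: "y1 \<in> Y" "y2 \<in> Y" "y3 \<in> Y" "y4 \<in> Y" "distinct [y1, y2, y3, y4]"
    using \<open>7 \<le> card Y\<close> by (auto simp: numeral_eq_Suc card_le_Suc_iff)
  define P where "P = {0, y1 + y2, y3 + y4, y1 + y2 + (y3 + y4)}"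
  have "additive_subgroup P"
    unfolding P_def by (rule additive_subgroup_span_pair)
  have "y1 + y2 \<noteq> y3 + y4"
    using sidonD [OF assms(1) y(1-4)] y(5) by auto
  then have "card P = 2 ^ 2"
    using y(5) by (auto simp: P_def bit_vec_add_eq_0_iff)
  let ?odd = "{y\<in>Y. odd (card (Y \<inter> (+) y ` P))}"
  have "card (Y \<inter> (+) y ` P) = 2" if "y \<in> {y1, y2, y3, y4}" for y
    unfolding P_def using sidon_card_cosets_four_points [OF assms(1) y that] .
  then have "?odd \<subseteq> Y - {y1, y2, y3, y4}"
    by auto
  then have "card ?odd + 4 \<le> card Y"
    using card_mono [OF _ \<open>?odd \<subseteq> _\<close>] y assms(2) by (simp add: card_Diff_subset)
  moreover have "?odd \<noteq> {}"
  proof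
    assume "?odd = {}"
    then have "card Y \<le> 2 * (card P - 1)"
      by (intro sidon_card_le_if_even_cosets [OF assms(1)]) (auto simp: P_def)
    then show False
      using \<open>card P = 2 ^ 2\<close> \<open>7 \<le> card Y\<close> by simp
  qed
  ultimately show ?thesis
    using that \<open>additive_subgroup P\<close> \<open>card P = 2 ^ 2\<close> by blast
qed

lemma not_meets_evenly:
  fixes Y :: "(bit ^ 'n) set"
  assumes n: "CARD('n) = 2 * m" "3 \<le> m" and card_Y: "card Y = 2 \<or> card Y = 2 ^ m + 2"
  shows "\<not> meets_evenly (Suc m) Y"
proof
  assume Y: "meets_evenly (Suc m) Y"
  from card_Y show False
  proof
    assume "card Y = 2"
    then obtain u v where "Y = {u, v}" "u \<noteq> v"
      by (auto simp: card_2_iff)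
    then have "4 dvd card Y"
      using four_dvd_card_translation_invariant [OF Y, of "u + v"] n
      by (auto simp: bit_vec_add_eq_0_iff add.left_commute)
    then show False
      using \<open>card Y = 2\<close> by simp
  next
    assume "card Y = 2 ^ m + 2"
    moreover have "(2::nat) ^ 3 \<le> 2 ^ m"
      using n(2) by (rule power_increasing) simp
    ultimately have "sidon Y" and "7 \<le> card Y"
      using sidon_if_meets_evenly [OF n(1) _ Y] n(2) by simp_all
    then obtain P where P: "additive_subgroup P" "card P = 2 ^ 2"
      and odd: "{y\<in>Y. odd (card (Y \<inter> (+) y ` P))} \<noteq> {}"
      and few: "card {y\<in>Y. odd (card (Y \<inter> (+) y ` P))} + 4 \<le> card Y"
      by (rule sidon_exists_subgroup_few_odd_cosets)
    from odd obtain t where "t \<in> Y" "odd (card (Y \<inter> (+) t ` P))"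
      by blast
    then have "2 ^ m \<le> card {y\<in>Y. odd (card (Y \<inter> (+) y ` P))}"
      using card_odd_cosets_ge [OF n(1) Y P] n(2) by simp
    then show False
      using few \<open>card Y = 2 ^ m + 2\<close> by simp
  qed
qed

lemma nonbent_radical_sizes:
  fixes F :: "bit ^ 'n \<Rightarrow> bit ^ 'n"
  assumes Q: "is_quadratic F" and A: "is_APN F" and n: "CARD('n) = 2 * m" "1 \<le> m"
    and large: "\<And>b. b \<noteq> 0 \<Longrightarrow> card (radical F b) \<noteq> 1 \<Longrightarrow> 2 ^ m \<le> card (radical F b)"
  defines "X \<equiv> {b. b \<noteq> 0 \<and> card (radical F b) \<noteq> 1}"
  shows "(card X = 1 \<or> card X = 2 ^ m + 1)
    \<and> (\<forall>b\<in>X. card (radical F b) = 2 ^ m \<or> card (radical F b) = 2 ^ (2 * m))"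
proof (rule partial_spread_sizes)
  show "card (radical F b) * card (radical F b') \<le> 2 ^ (2 * m)" if "b \<in> X" "b' \<in> X" "b \<noteq> b'" for b b'
    using card_mult_card_le_if_inter_trivial [OF additive_subgroup_radical [OF Q] additive_subgroup_radical [OF Q]]
      radical_inter_radical [OF Q A] that n(1) by (simp add: X_def)
  have "(\<Sum>b\<in>X. card (radical F b) - 1) = (\<Sum>b\<in>UNIV - {0}. card (radical F b) - 1)"
    by (rule sum.mono_neutral_left) (auto simp: X_def)
  then show "(\<Sum>b\<in>X. card (radical F b) - 1) = 2 ^ (2 * m) - 1"
    using sum_card_radical [OF Q A] n(1) by simp
qed (use n large in \<open>auto simp: X_def\<close>)

theorem mainTheorem16:
  fixes F :: "bit ^ 'n \<Rightarrow> bit ^ 'n"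
  assumes "CARD('n) \<ge> 8" and "even CARD('n)"
    and "is_quadratic F" and "is_APN F"
  shows "\<exists>b. b \<noteq> 0 \<and> \<not> is_bent_component F b
             \<and> real_of_int (amplitude F b) < 2 powr (3 * real CARD('n) / 4)"
proof (rule ccontr)
  assume contra: "\<not> ?thesis"
  note Q = assms(3) and A = assms(4)
  obtain m where n: "CARD('n) = 2 * m"
    using assms(2) by (auto elim: evenE)
  with assms(1) have "4 \<le> m"
    by simp
  have large: "2 ^ m \<le> card (radical F b)" if "b \<noteq> 0" "card (radical F b) \<noteq> 1" for b
    using contra that amplitude_ge_iff_card_radical [OF Q n] is_bent_component_iff_card_radical [OF Q]
    by (meson not_less)
  define X where "X = {b. b \<noteq> 0 \<and> card (radical F b) \<noteq> 1}"
  have card_X: "card X = 1 \<or> card X = 2 ^ m + 1"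
    and sizes: "\<forall>b\<in>X. card (radical F b) = 2 ^ m \<or> card (radical F b) = 2 ^ (2 * m)"
    using nonbent_radical_sizes [OF Q A n _ large] \<open>4 \<le> m\<close> unfolding X_def by auto
  have "{b. 2 ^ Suc m dvd walsh F b 0} = insert 0 X"
    using power_Suc_dvd_walsh_iff [OF Q n] sizes \<open>4 \<le> m\<close> by (auto simp: X_def card_bit n)
  then have "meets_evenly (Suc m) (insert 0 X)"
    using meets_evenly_walsh_dvd [OF Q n] by simp
  moreover have "card (insert 0 X) = 2 \<or> card (insert 0 X) = 2 ^ m + 2"
    using card_X by (simp add: X_def)
  ultimately show False
    using not_meets_evenly [OF n] \<open>4 \<le> m\<close> by simp
qed

end
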